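(* Let $\theta$ be uniformly distributed on $[0,2\pi)$. Let $C$ be a twice-differentiable plane curve parameterized by arc length at unit speed by $\gamma:[0,L(C)]\to\mathbb{R}^2$, such that $[0,L(C)]$ can be covered up to a set of measure zero by a countable set of open intervals none of which contains an inflection point. Mark every $y\in[0,L(C)]$ such that $\alpha(\gamma(y))=\theta$ and such that for every $\epsilon>0$ there exists $0<\delta<\epsilon$ with $\alpha(\gamma(y-\delta))\neq\theta$. Let $\ell$ be the number of marked points. Then $E[\ell]=A(C)/(2\pi)$.
   Context: For a point $x$ on $C$, $\alpha(x)\in[0,2\pi)$ is the angle between the (oriented) tangent to $C$ at $x$ and the $x$-axis. $L(C)$ is the length of $C$, $\kappa$ its curvature, and $A(C)=\int_0^{L(C)}|\kappa(y)|\,dy$ its total absolute curvature. *)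

theory Defs
  imports "HOL-Analysis.Analysis"
begin

text \<open>The plane is modelled as the complex numbers.  The angle in [0, 2pi) between
  a (nonzero) vector v and the x-axis.\<close>
definition tangent_angle :: "complex \<Rightarrow> real" where
  "tangent_angle v = (if Arg v < 0 then Arg v + 2 * pi else Arg v)"

text \<open>Signed curvature of a unit-speed curve with first derivative g' and second
  derivative g'': kappa = det(g', g'').\<close>
definition signed_curv :: "(real \<Rightarrow> complex) \<Rightarrow> (real \<Rightarrow> complex) \<Rightarrow> real \<Rightarrow> real" where
  "signed_curv g' g'' t = Im (cnj (g' t) * g'' t)"

definition inflection_point :: "(real \<Rightarrow> real) \<Rightarrow> real \<Rightarrow> real \<Rightarrow> bool" where
  "inflection_point k L y \<longleftrightarrow>
     (\<forall>\<epsilon>>0. \<exists>s\<in>{0..L}. \<exists>t\<in>{0..L}. \<bar>s - y\<bar> < \<epsilon> \<and> \<bar>t - y\<bar> < \<epsilon> \<and> k s > 0 \<and> k t < 0)"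

text \<open>Marked parameters for direction theta (points to the left of the parameter
  interval impose no constraint).\<close>
definition marked :: "(real \<Rightarrow> real) \<Rightarrow> real \<Rightarrow> real \<Rightarrow> real set" where
  "marked \<alpha> L \<theta> = {y \<in> {0..L}. \<alpha> y = \<theta> \<and>
     (\<forall>\<epsilon>>0. \<exists>\<delta>. 0 < \<delta> \<and> \<delta> < \<epsilon> \<and> (y - \<delta> \<notin> {0..L} \<or> \<alpha> (y - \<delta>) \<noteq> \<theta>))}"

end

theory Submission
  imports Defs
begin

text \<open>Off the parameters where the tangent points in direction \<open>0\<close> (the branch cut of
  the angle), the tangent angle \<open>\<alpha>\<close> is differentiable with derivative the signed
  curvature; where the tangent does point in direction \<open>0\<close>, the curvature vanishes
  except at the countably many isolated such parameters.  Banach's indicatrix theorem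
  \<open>\<integral> #{y. \<alpha> y = \<theta>} d\<theta> = \<integral> |\<alpha>'|\<close> then gives the expected count, once one knows
  that for almost every \<theta> the marked points are exactly the solutions of
  \<open>\<alpha> y = \<theta>\<close>: a solution that is not marked lies on a stretch where \<open>\<alpha> = \<theta>\<close>, so
  \<theta> is a value of \<alpha> at a rational parameter.

  The indicatrix theorem is proved by cutting \<open>{\<alpha>' \<noteq> 0}\<close> into countably many Borel
  pieces on which \<alpha> is injective, applying the change of variables formula on each
  piece, and discarding the critical values by Sard's lemma.\<close>

section \<open>Banach's indicatrix theorem\<close>

text \<open>\<open>f'\<close> is the pointwise limit of the continuous difference quotients
  \<open>n (f (x + 1/n) - f x)\<close>, restricted to the open sets where they are defined.\<close>
lemma borel_measurable_indicator_times_derivative: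
  fixes f f' :: "real \<Rightarrow> real"
  assumes U: "open U" and der: "\<And>x. x \<in> U \<Longrightarrow> (f has_real_derivative f' x) (at x)"
  shows "(\<lambda>x. indicator U x * f' x) \<in> borel_measurable borel"
proof -
  define V where "V n = U \<inter> (\<lambda>x. x + 1 / real (Suc n)) -` U" for n
  define F where "F n x = indicator (V n) x *\<^sub>R (real (Suc n) * (f (x + 1 / real (Suc n)) - f x))" for n x
  have contf: "continuous_on U f"
    using der by (meson DERIV_isCont continuous_at_imp_continuous_on)
  have openV: "open (V n)" for n
    unfolding V_def by (intro open_Int U open_vimage continuous_intros)
  have meas: "F n \<in> borel_measurable borel" for n
    unfolding F_def
  proof (rule borel_measurable_continuous_on_indicator)
    show "V n \<in> sets borel" using openV by auto
    have c1: "continuous_on (V n) (\<lambda>x. f (x + 1 / real (Suc n)))"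
      by (rule continuous_on_compose2[OF contf]) (auto intro!: continuous_intros simp: V_def)
    have c2: "continuous_on (V n) f"
      by (rule continuous_on_subset[OF contf]) (auto simp: V_def)
    show "continuous_on (V n) (\<lambda>x. real (Suc n) * (f (x + 1 / real (Suc n)) - f x))"
      by (intro continuous_intros c1 c2)
  qed
  have lim: "(\<lambda>n. F n x) \<longlonglongrightarrow> indicator U x * f' x" for x
  proof (cases "x \<in> U")
    case False
    then have "F n x = 0" for n by (simp add: F_def V_def)
    then show ?thesis using False by simp
  next
    case True
    have shift: "\<forall>\<^sub>F n in sequentially. x + 1 / real (Suc n) \<in> U"
    proof -
      have "(\<lambda>n. x + 1 / real (Suc n)) \<longlonglongrightarrow> x + 0"
        by (intro tendsto_add tendsto_const LIMSEQ_Suc[OF lim_inverse_n'])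
      then show ?thesis using U True by (simp add: topological_tendstoD)
    qed
    have "filterlim (\<lambda>n. 1 / real (Suc n)) (at 0) sequentially"
      by (intro filterlim_atI LIMSEQ_Suc[OF lim_inverse_n']) auto
    from filterlim_compose[OF der[OF True, unfolded DERIV_def] this]
    have "(\<lambda>n. real (Suc n) * (f (x + 1 / real (Suc n)) - f x)) \<longlonglongrightarrow> f' x"
      by (simp add: mult.commute)
    moreover have "\<forall>\<^sub>F n in sequentially. real (Suc n) * (f (x + 1 / real (Suc n)) - f x) = F n x"
      using shift by eventually_elim (simp add: F_def V_def True)
    ultimately have "(\<lambda>n. F n x) \<longlonglongrightarrow> f' x" by (rule Lim_transform_eventually)
    then show ?thesis using True by simp
  qed
  show ?thesis
    by (rule borel_measurable_LIMSEQ_real[OF lim meas])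
qed

lemma negligible_image_zero_derivative:
  fixes f :: "real \<Rightarrow> real"
  assumes der: "\<And>x. x \<in> S \<Longrightarrow> (f has_real_derivative 0) (at x within S)"
  shows "negligible (f ` S)"
proof -
  let ?F = "\<lambda>x::real^1. vec (f (x$1)) :: real^1"
  have "negligible (?F ` (vec ` S))"
  proof (rule baby_Sard[where f' = "\<lambda>x. (*\<^sub>R) 0"])
    show "(?F has_derivative (*\<^sub>R) 0) (at x within vec ` S)" if x: "x \<in> vec ` S" for x
    proof -
      obtain a where a: "a \<in> S" "x = vec a" using x by blast
      have "(f has_derivative (\<lambda>x. x * 0)) (at a within S)"
        using der[OF a(1)] by (simp add: has_field_derivative_def lambda_zero)
      from has_derivative_vector_1[OF this] show ?thesis using a by simp
    qed
    have "((*\<^sub>R) (0::real) :: real^1 \<Rightarrow> real^1) = (\<lambda>h. 0)" by auto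
    moreover have "(\<chi> i j. (0::real)) = (0::real^1^1)" by (simp add: vec_eq_iff)
    ultimately show "rank (matrix ((*\<^sub>R) (0::real) :: real^1 \<Rightarrow> real^1)) < CARD(1)"
      by (simp add: matrix_def rank_0)
  qed simp
  then have "negligible (vec ` (f ` S) :: (real^1) set)" by (simp add: image_image)
  then have "negligible ((\<lambda>x::real^1. x$1) ` (vec ` (f ` S)))"
    by (rule negligible_differentiable_image_negligible[rotated])
       (simp_all add: bounded_linear_imp_differentiable_on bounded_linear_vec_nth)
  then show ?thesis by (simp add: image_image)
qed

lemma lebesgue_emeasure_injective_image:
  fixes f f' :: "real \<Rightarrow> real"
  assumes E: "E \<in> sets borel" "bounded E"
    and der: "\<And>x. x \<in> E \<Longrightarrow> (f has_real_derivative f' x) (at x within E)"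
    and inj: "inj_on f E"
    and bnd: "\<And>x. x \<in> E \<Longrightarrow> \<bar>f' x\<bar> \<le> B"
    and meas: "(\<lambda>x. indicator E x * f' x) \<in> borel_measurable borel"
  shows "f ` E \<in> sets lebesgue"
    and "emeasure lebesgue (f ` E) = (\<integral>\<^sup>+ x. ennreal \<bar>f' x\<bar> * indicator E x \<partial>lborel)"
proof -
  have El: "E \<in> sets lebesgue" using E(1) by simp
  have "(\<lambda>x. \<bar>indicator E x * f' x\<bar>) \<in> borel_measurable lebesgue"
    using meas by (simp add: measurable_completion)
  moreover have "(\<lambda>x. \<bar>indicator E x * f' x\<bar>) = (\<lambda>x. if x \<in> E then \<bar>f' x\<bar> else 0)"
    by (auto simp: indicator_def)
  ultimately have "(\<lambda>x. \<bar>f' x\<bar>) \<in> borel_measurable (lebesgue_on E)"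
    using borel_measurable_if[OF El] by metis
  then have ai: "(\<lambda>x. \<bar>f' x\<bar>) absolutely_integrable_on E"
    using bnd bounded_set_imp_lmeasurable[OF E(2) El]
    by (intro measurable_bounded_by_integrable_imp_absolutely_integrable[OF _ El integrable_on_const])
       auto
  define b where "b = integral E (\<lambda>x. \<bar>f' x\<bar>)"
  have "(\<lambda>x. 1::real) absolutely_integrable_on (f ` E) \<and> integral (f ` E) (\<lambda>x. 1::real) = b"
    using has_absolute_integral_change_of_variables_1'[OF El der inj, of "\<lambda>_. 1" b] ai
    by (simp add: b_def)
  then have fE: "f ` E \<in> lmeasurable" and mfE: "measure lebesgue (f ` E) = b"
    by (auto simp: lmeasurable_iff_integrable_on set_lebesgue_integral_eq_integral(1)
        lmeasure_integral)
  then show "f ` E \<in> sets lebesgue" by auto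
  have "((\<lambda>x. \<bar>f' x\<bar>) has_integral b) E"
    using ai unfolding b_def by (simp add: set_lebesgue_integral_eq_integral(1) integrable_integral)
  from nn_integral_has_integral_lebesgue'[OF _ this]
  show "emeasure lebesgue (f ` E) = (\<integral>\<^sup>+ x. ennreal \<bar>f' x\<bar> * indicator E x \<partial>lborel)"
    using fE mfE by (simp add: emeasure_eq_measure2)
qed

text \<open>Unlike the set of points near which \<open>f\<close> is monotone, these sets are closed, so
  the pieces cut out of them below are Borel.\<close>
definition radial_mono_points :: "(real \<Rightarrow> real) \<Rightarrow> real set \<Rightarrow> real \<Rightarrow> real \<Rightarrow> real set" where
  "radial_mono_points f U s r =
     {x \<in> U. ball x r \<subseteq> U \<and> (\<forall>y\<in>ball x r. 0 \<le> s * ((f y - f x) * (y - x)))}"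

lemma closed_radial_mono_points:
  fixes f :: "real \<Rightarrow> real"
  assumes U: "open U" and contf: "continuous_on U f" and r: "r > 0"
  shows "closed (radial_mono_points f U s r)"
  unfolding closed_sequential_limits
proof (intro allI impI, elim conjE)
  fix xs :: "nat \<Rightarrow> real" and l
  assume mem: "\<forall>n. xs n \<in> radial_mono_points f U s r" and lim: "xs \<longlonglongrightarrow> l"
  have evball: "\<forall>\<^sub>F n in sequentially. y \<in> ball (xs n) r" if y: "y \<in> ball l r" for y
  proof -
    have "(\<lambda>n. dist y (xs n)) \<longlonglongrightarrow> dist y l" by (intro tendsto_intros lim)
    moreover have "dist y l < r" using y by (simp add: dist_commute)
    ultimately have "\<forall>\<^sub>F n in sequentially. dist y (xs n) < r" by (rule order_tendstoD)
    then show ?thesis by (simp add: dist_commute)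
  qed
  have ballU: "ball l r \<subseteq> U"
  proof
    fix y assume "y \<in> ball l r"
    from eventually_happens'[OF _ evball[OF this]] obtain n where "y \<in> ball (xs n) r" by auto
    then show "y \<in> U" using mem unfolding radial_mono_points_def by blast
  qed
  have lU: "l \<in> U" using ballU r by auto
  have fl: "(\<lambda>n. f (xs n)) \<longlonglongrightarrow> f l"
    using contf lU U lim by (metis continuous_on_eq_continuous_at isCont_tendsto_compose)
  have "0 \<le> s * ((f y - f l) * (y - l))" if y: "y \<in> ball l r" for y
  proof (rule tendsto_lowerbound)
    show "(\<lambda>n. s * ((f y - f (xs n)) * (y - xs n))) \<longlonglongrightarrow> s * ((f y - f l) * (y - l))"
      by (intro tendsto_intros fl lim)
    show "\<forall>\<^sub>F n in sequentially. 0 \<le> s * ((f y - f (xs n)) * (y - xs n))"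
      using evball[OF y] by eventually_elim (use mem in \<open>auto simp: radial_mono_points_def\<close>)
  qed simp
  then show "l \<in> radial_mono_points f U s r"
    using lU ballU by (simp add: radial_mono_points_def)
qed

lemma has_real_derivative_zero_if_constant_right:
  fixes f :: "real \<Rightarrow> real"
  assumes der: "(f has_real_derivative D) (at x)" and xy: "x < y"
    and const: "\<And>z. z \<in> {x..y} \<Longrightarrow> f z = f x"
  shows "D = 0"
proof -
  have "\<forall>\<^sub>F h in at_right 0. h \<in> {0<..<y - x}"
    using xy by (intro eventually_at_right_real) simp
  then have "\<forall>\<^sub>F h in at_right 0. (f (x + h) - f x) / h = 0"
  proof eventually_elim
    case (elim h)
    then have "f (x + h) = f x" by (intro const) auto
    then show ?case by simp
  qed
  then have "((\<lambda>h. (f (x + h) - f x) / h) \<longlongrightarrow> 0) (at_right 0)"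
    by (rule tendsto_eventually)
  moreover have "((\<lambda>h. (f (x + h) - f x) / h) \<longlongrightarrow> D) (at_right 0)"
    using der unfolding DERIV_def by (rule tendsto_mono[OF at_le, rotated]) simp
  ultimately show "D = 0"
    using tendsto_unique[OF trivial_limit_at_right_real] by metis
qed

text \<open>Two points of such a set with equal values pin \<open>f\<close> to that value on the
  interval between them, so \<open>f'\<close> would vanish at the left one.\<close>
lemma inj_on_radial_mono_points:
  fixes f f' :: "real \<Rightarrow> real"
  assumes der: "\<And>x. x \<in> U \<Longrightarrow> (f has_real_derivative f' x) (at x)"
    and s: "s \<noteq> 0" and E: "E \<subseteq> radial_mono_points f U s r"
    and small: "\<And>x y. x \<in> E \<Longrightarrow> y \<in> E \<Longrightarrow> \<bar>x - y\<bar> < r"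
    and nz: "\<And>x. x \<in> E \<Longrightarrow> f' x \<noteq> 0"
  shows "inj_on f E"
proof -
  have False if xy: "x < y" "x \<in> E" "y \<in> E" "f x = f y" for x y
  proof -
    have "f z = f x" if z: "x < z" "z < y" for z
    proof -
      have "z \<in> ball x r" "z \<in> ball y r"
        using small[OF xy(2,3)] z by (auto simp: dist_real_def)
      then have h1: "0 \<le> s * ((f z - f x) * (z - x))" and h2: "0 \<le> s * ((f z - f y) * (z - y))"
        using E xy(2,3) by (auto simp: radial_mono_points_def)
      have "0 \<le> s * (f z - f x)"
        using h1 z by (simp add: mult.assoc[symmetric] zero_le_mult_iff)
      moreover have "s * (f z - f x) \<le> 0"
        using h2 z xy(4) by (simp add: mult.assoc[symmetric] zero_le_mult_iff)
      ultimately show ?thesis using s by simp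
    qed
    then have "f z = f x" if "z \<in> {x..y}" for z
      using that xy(4) by (cases "z = x \<or> z = y") auto
    moreover have "x \<in> U" using E xy(2) by (auto simp: radial_mono_points_def)
    ultimately have "f' x = 0"
      by (intro has_real_derivative_zero_if_constant_right[OF der xy(1)])
    then show False using nz xy(2) by blast
  qed
  then show ?thesis
    unfolding inj_on_def by (metis linorder_neq_iff)
qed

lemma radial_mono_points_cover:
  fixes f f' :: "real \<Rightarrow> real"
  assumes U: "open U" and xU: "x \<in> U" and der: "(f has_real_derivative f' x) (at x)"
    and nz: "f' x \<noteq> 0"
  shows "\<exists>n. x \<in> radial_mono_points f U (sgn (f' x)) (1 / real (Suc n))"
proof -
  let ?s = "sgn (f' x)"
  have "((\<lambda>h. ?s * ((f (x + h) - f x) / h)) \<longlongrightarrow> ?s * f' x) (at 0)"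
    using der by (intro tendsto_intros) (simp add: DERIV_def)
  moreover have "?s * f' x > 0" using nz by (simp add: sgn_real_def)
  ultimately have "\<forall>\<^sub>F h in at 0. ?s * ((f (x + h) - f x) / h) > 0"
    by (rule order_tendstoD)
  then obtain d where d: "d > 0"
    and dh: "\<And>h. h \<noteq> 0 \<Longrightarrow> dist h 0 < d \<Longrightarrow> ?s * ((f (x + h) - f x) / h) > 0"
    unfolding eventually_at by blast
  obtain e where e: "e > 0" "ball x e \<subseteq> U" using U xU open_contains_ball by blast
  obtain n where n: "1 / real (Suc n) < min d e"
    using d e by (metis min_less_iff_conj nat_approx_posE)
  have "0 \<le> ?s * ((f y - f x) * (y - x))" if y: "y \<in> ball x (1 / real (Suc n))" for y
  proof (cases "y = x")
    case False
    have "dist (y - x) 0 < d" using y n by (simp add: dist_real_def abs_minus_commute)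
    then have q: "?s * ((f (x + (y - x)) - f x) / (y - x)) > 0" using False by (intro dh) auto
    have "?s * ((f y - f x) * (y - x)) = (?s * ((f (x + (y - x)) - f x) / (y - x))) * (y - x)^2"
      using False by (simp add: field_simps power2_eq_square)
    also have "\<dots> \<ge> 0" by (rule mult_nonneg_nonneg[OF less_imp_le[OF q] zero_le_power2])
    finally show ?thesis .
  qed simp
  moreover have "ball x (1 / real (Suc n)) \<subseteq> U" using e n by (auto simp: ball_def)
  ultimately show ?thesis using xU by (auto simp: radial_mono_points_def)
qed

text \<open>The interval of length \<open>r / 2\<close> makes a piece injective, and the bound \<open>m\<close>
  makes \<open>|f'|\<close> integrable on it.\<close>
definition deriv_piece ::
    "(real \<Rightarrow> real) \<Rightarrow> (real \<Rightarrow> real) \<Rightarrow> real set \<Rightarrow> real \<Rightarrow> real \<Rightarrow> int \<Rightarrow> nat \<Rightarrow> real set" where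
  "deriv_piece f f' U s r j m =
     radial_mono_points f U s r \<inter> {of_int j * (r / 2) ..< (of_int j + 1) * (r / 2)}
       \<inter> {x \<in> U. f' x \<noteq> 0 \<and> \<bar>f' x\<bar> \<le> real m}"

lemma deriv_piece_properties:
  fixes f f' :: "real \<Rightarrow> real" and j :: int and m :: nat
  assumes U: "open U" and der: "\<And>x. x \<in> U \<Longrightarrow> (f has_real_derivative f' x) (at x)"
    and s: "s \<noteq> 0" and r: "r > 0"
  defines "E \<equiv> deriv_piece f f' U s r j m"
  shows "E \<in> sets borel" and "bounded E" and "inj_on f E" and "\<And>x. x \<in> E \<Longrightarrow> \<bar>f' x\<bar> \<le> real m"
proof -
  let ?I = "{of_int j * (r / 2) ..< (of_int j + 1) * (r / 2)}"
  have "closed (radial_mono_points f U s r)"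
    using der by (intro closed_radial_mono_points[OF U _ r] continuous_at_imp_continuous_on)
      (auto intro: DERIV_isCont)
  moreover have "(\<lambda>x. indicator U x * f' x) \<in> borel_measurable borel"
    by (rule borel_measurable_indicator_times_derivative[OF U der])
  then have "{x. indicator U x * f' x \<noteq> 0 \<and> \<bar>indicator U x * f' x\<bar> \<le> real m} \<in> sets borel"
    by measurable
  moreover have "{x. indicator U x * f' x \<noteq> 0 \<and> \<bar>indicator U x * f' x\<bar> \<le> real m}
      = {x \<in> U. f' x \<noteq> 0 \<and> \<bar>f' x\<bar> \<le> real m}"
    by (auto simp: indicator_def)
  ultimately show "E \<in> sets borel"
    by (simp add: E_def deriv_piece_def sets.Int borel_closed)
  show "bounded E"
    by (rule bounded_subset[of ?I]) (auto simp: E_def deriv_piece_def)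
  show "inj_on f E"
  proof (rule inj_on_radial_mono_points[OF der s])
    show "\<bar>x - y\<bar> < r" if "x \<in> E" "y \<in> E" for x y
    proof -
      have "x \<in> ?I" "y \<in> ?I" using that by (auto simp: E_def deriv_piece_def)
      moreover have "(of_int j + 1) * (r / 2) = of_int j * (r / 2) + r / 2"
        by (simp add: algebra_simps)
      ultimately show ?thesis using r by auto
    qed
  qed (auto simp: E_def deriv_piece_def)
  show "\<bar>f' x\<bar> \<le> real m" if "x \<in> E" for x
    using that by (simp add: E_def deriv_piece_def)
qed

lemma deriv_piece_cover:
  fixes f f' :: "real \<Rightarrow> real"
  assumes U: "open U" and x: "x \<in> U" and der: "(f has_real_derivative f' x) (at x)"
    and nz: "f' x \<noteq> 0"
  shows "\<exists>n j m. x \<in> deriv_piece f f' U (sgn (f' x)) (1 / real (Suc n)) j m"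
proof -
  obtain n where n: "x \<in> radial_mono_points f U (sgn (f' x)) (1 / real (Suc n))"
    using radial_mono_points_cover[of U x f f', OF U x der nz] by blast
  define h where "h = 1 / real (Suc n) / 2"
  have "h > 0" by (simp add: h_def)
  then have "x \<in> {of_int \<lfloor>x / h\<rfloor> * h ..< (of_int \<lfloor>x / h\<rfloor> + 1) * h}"
    using floor_divide_lower[of h x] floor_divide_upper[of h x] by simp
  moreover have "\<bar>f' x\<bar> \<le> real (nat \<lceil>\<bar>f' x\<bar>\<rceil>)" by (rule real_nat_ceiling_ge)
  ultimately have "x \<in> deriv_piece f f' U (sgn (f' x)) (1 / real (Suc n)) \<lfloor>x / h\<rfloor> (nat \<lceil>\<bar>f' x\<bar>\<rceil>)"
    using n x nz by (simp add: deriv_piece_def h_def)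
  then show ?thesis by blast
qed

lemma countable_injective_cover_nonzero_derivative:
  fixes f f' :: "real \<Rightarrow> real"
  assumes U: "open U" and der: "\<And>x. x \<in> U \<Longrightarrow> (f has_real_derivative f' x) (at x)"
  obtains A :: "nat \<Rightarrow> real set"
  where "(\<Union>k. A k) = {x \<in> U. f' x \<noteq> 0}"
    and "\<And>k. A k \<in> sets borel" and "\<And>k. bounded (A k)" and "\<And>k. inj_on f (A k)"
    and "\<And>k. \<exists>B. \<forall>x\<in>A k. \<bar>f' x\<bar> \<le> B"
proof -
  define piece where "piece = (\<lambda>(b::bool, n::nat, j::int, m::nat).
    deriv_piece f f' U (if b then 1 else -1) (1 / real (Suc n)) j m)"
  have piece_props: "piece p \<in> sets borel" "bounded (piece p)" "inj_on f (piece p)"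
    "\<exists>B. \<forall>x\<in>piece p. \<bar>f' x\<bar> \<le> B" for p
  proof -
    obtain b n j m where p: "p = (b, n, j, m)" by (cases p) auto
    have "(if b then 1 else -1 :: real) \<noteq> 0" "1 / real (Suc n) > 0" by simp_all
    note props = deriv_piece_properties[OF U der this, where j = j and m = m]
    show "piece p \<in> sets borel" "bounded (piece p)" "inj_on f (piece p)"
      "\<exists>B. \<forall>x\<in>piece p. \<bar>f' x\<bar> \<le> B"
      using props unfolding p piece_def by (auto intro!: exI[of _ "real m"])
  qed
  have "(\<Union>k. piece (from_nat k)) = (\<Union>p. piece p)"
    by (simp add: image_comp[symmetric, unfolded comp_def] surj_from_nat)
  also have "\<dots> = {x \<in> U. f' x \<noteq> 0}"
  proof (intro equalityI subsetI)
    fix x assume "x \<in> (\<Union>p. piece p)"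
    then show "x \<in> {x \<in> U. f' x \<noteq> 0}" by (auto simp: piece_def deriv_piece_def)
  next
    fix x assume x: "x \<in> {x \<in> U. f' x \<noteq> 0}"
    then obtain n j m where "x \<in> deriv_piece f f' U (sgn (f' x)) (1 / real (Suc n)) j m"
      using deriv_piece_cover[of U x f f', OF U _ der] by blast
    moreover have "sgn (f' x) = (if f' x > 0 then 1 else -1)" using x by (simp add: sgn_real_def)
    ultimately have "x \<in> piece (f' x > 0, n, j, m)" by (simp add: piece_def)
    then show "x \<in> (\<Union>p. piece p)" by blast
  qed
  finally show ?thesis
    by (rule that) (simp_all add: piece_props)
qed

lemma count_level_set_disjoint_injective:
  assumes disj: "disjoint_family D" and inj: "\<And>k. inj_on f (D k)"
  shows "emeasure (count_space UNIV) {x \<in> (\<Union>k. D k). f x = t} = (\<Sum>k. indicator (f ` D k) t)"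
proof -
  have "{x \<in> (\<Union>k. D k). f x = t} = (\<Union>k. D k \<inter> {x. f x = t})" by blast
  then have "emeasure (count_space UNIV) {x \<in> (\<Union>k. D k). f x = t} =
      (\<Sum>k. emeasure (count_space UNIV) (D k \<inter> {x. f x = t}))"
    by (simp add: suminf_emeasure disjoint_family_subset[OF disj])
  also have "\<dots> = (\<Sum>k. indicator (f ` D k) t)"
  proof (rule suminf_cong)
    fix k
    show "emeasure (count_space UNIV) (D k \<inter> {x. f x = t}) = indicator (f ` D k) t"
    proof (cases "t \<in> f ` D k")
      case True
      then obtain a where "a \<in> D k" "f a = t" by blast
      then have "D k \<inter> {x. f x = t} = {a}" using inj[of k] by (auto simp: inj_on_def)
      then show ?thesis using True by simp
    next
      case False
      then have "D k \<inter> {x. f x = t} = {}" by blast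
      then show ?thesis using False by simp
    qed
  qed
  finally show ?thesis .
qed

lemma nn_integral_suminf_indicator_injective_images:
  fixes f f' :: "real \<Rightarrow> real"
  assumes U: "open U" and der: "\<And>x. x \<in> U \<Longrightarrow> (f has_real_derivative f' x) (at x)"
    and disj: "disjoint_family D" and DU: "\<And>k. D k \<subseteq> U"
    and D: "\<And>k. D k \<in> sets borel" "\<And>k. bounded (D k)" "\<And>k. inj_on f (D k)"
    and bnd: "\<And>k. \<exists>B. \<forall>x\<in>D k. \<bar>f' x\<bar> \<le> B"
  shows "(\<lambda>t. \<Sum>k. indicator (f ` D k) t :: ennreal) \<in> borel_measurable lebesgue"
    and "(\<integral>\<^sup>+ t. (\<Sum>k. indicator (f ` D k) t) \<partial>lebesgue) =
         (\<integral>\<^sup>+ x. ennreal \<bar>f' x\<bar> * indicator (\<Union>k. D k) x \<partial>lborel)"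
proof -
  have meas: "(\<lambda>x. indicator (D k) x * f' x) \<in> borel_measurable borel" for k
  proof -
    have "(\<lambda>x. indicator (D k) x * (indicator U x * f' x)) \<in> borel_measurable borel"
      using borel_measurable_indicator_times_derivative[OF U der] D(1) by measurable
    moreover have "indicator (D k) x * (indicator U x * f' x) = indicator (D k) x * f' x" for x
      using DU[of k] by (auto simp: indicator_def)
    ultimately show ?thesis by simp
  qed
  have image: "f ` D k \<in> sets lebesgue \<and>
      emeasure lebesgue (f ` D k) = (\<integral>\<^sup>+ x. ennreal \<bar>f' x\<bar> * indicator (D k) x \<partial>lborel)" for k
  proof -
    obtain B where "\<forall>x\<in>D k. \<bar>f' x\<bar> \<le> B" using bnd by blast
    moreover have "(f has_real_derivative f' x) (at x within D k)" if "x \<in> D k" for x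
      using der[of x] DU[of k] that by (blast intro: has_field_derivative_at_within)
    ultimately show ?thesis
      using lebesgue_emeasure_injective_image[OF D(1,2) _ D(3) _ meas] by blast
  qed
  then have [measurable]: "f ` D k \<in> sets lebesgue" for k by blast
  show "(\<lambda>t. \<Sum>k. indicator (f ` D k) t :: ennreal) \<in> borel_measurable lebesgue"
    by measurable
  have "(\<integral>\<^sup>+ t. (\<Sum>k. indicator (f ` D k) t) \<partial>lebesgue) = (\<Sum>k. emeasure lebesgue (f ` D k))"
    by (subst nn_integral_suminf) simp_all
  also have "\<dots> = (\<Sum>k. \<integral>\<^sup>+ x. ennreal \<bar>f' x\<bar> * indicator (D k) x \<partial>lborel)"
    using image by simp
  also have "\<dots> = (\<integral>\<^sup>+ x. (\<Sum>k. ennreal \<bar>f' x\<bar> * indicator (D k) x) \<partial>lborel)"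
  proof (rule nn_integral_suminf[symmetric])
    fix k
    have "(\<lambda>x. ennreal \<bar>indicator (D k) x * f' x\<bar>) \<in> borel_measurable borel"
      using meas by measurable
    moreover have "ennreal \<bar>indicator (D k) x * f' x\<bar> = ennreal \<bar>f' x\<bar> * indicator (D k) x" for x
      by (simp add: indicator_def)
    ultimately show "(\<lambda>x. ennreal \<bar>f' x\<bar> * indicator (D k) x) \<in> borel_measurable lborel"
      by simp
  qed
  also have "\<dots> = (\<integral>\<^sup>+ x. ennreal \<bar>f' x\<bar> * indicator (\<Union>k. D k) x \<partial>lborel)"
    by (simp add: ennreal_suminf_cmult suminf_indicator[OF disj])
  finally show "(\<integral>\<^sup>+ t. (\<Sum>k. indicator (f ` D k) t) \<partial>lebesgue) =
      (\<integral>\<^sup>+ x. ennreal \<bar>f' x\<bar> * indicator (\<Union>k. D k) x \<partial>lborel)" .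
qed

theorem banach_indicatrix:
  fixes f f' :: "real \<Rightarrow> real"
  assumes U: "open U" and der: "\<And>x. x \<in> U \<Longrightarrow> (f has_real_derivative f' x) (at x)"
  obtains N :: "real \<Rightarrow> ennreal"
  where "N \<in> borel_measurable borel"
    and "AE t in lborel. emeasure (count_space UNIV) {x \<in> U. f x = t} = N t"
    and "(\<integral>\<^sup>+ t. N t \<partial>lborel) = (\<integral>\<^sup>+ x. ennreal \<bar>f' x\<bar> * indicator U x \<partial>lborel)"
proof -
  obtain A :: "nat \<Rightarrow> real set" where A: "(\<Union>k. A k) = {x \<in> U. f' x \<noteq> 0}" "\<And>k. A k \<in> sets borel"
    "\<And>k. bounded (A k)" "\<And>k. inj_on f (A k)" "\<And>k. \<exists>B. \<forall>x\<in>A k. \<bar>f' x\<bar> \<le> B"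
    using countable_injective_cover_nonzero_derivative[OF U der] by blast
  define D where "D = disjointed A"
  have DA: "D k \<subseteq> A k" for k unfolding D_def by (rule disjointed_subset)
  have D_Un: "(\<Union>k. D k) = {x \<in> U. f' x \<noteq> 0}" unfolding D_def by (simp add: UN_disjointed_eq A(1))
  have D_disj: "disjoint_family D" unfolding D_def by (rule disjoint_family_disjointed)
  have D_borel: "D k \<in> sets borel" for k
    using sets.range_disjointed_sets[of A borel] A(2) unfolding D_def by blast
  have D_U: "D k \<subseteq> U" for k using D_Un by blast
  have D_props: "bounded (D k)" "inj_on f (D k)" "\<exists>B. \<forall>x\<in>D k. \<bar>f' x\<bar> \<le> B" for k
    using bounded_subset[OF A(3) DA] inj_on_subset[OF A(4) DA] A(5)[of k] DA[of k] by blast+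
  define N0 where "N0 t = (\<Sum>k. indicator (f ` D k) t :: ennreal)" for t
  note pieces = nn_integral_suminf_indicator_injective_images[OF U der D_disj D_U D_borel D_props,
      folded N0_def]
  \<comment> \<open>By Sard, critical values are negligible; off them, all preimages lie in the pieces.\<close>
  have "negligible (f ` {x \<in> U. f' x = 0})"
    using der by (intro negligible_image_zero_derivative)
      (metis (mono_tags) has_field_derivative_at_within mem_Collect_eq)
  then have "AE t in lebesgue. t \<notin> f ` {x \<in> U. f' x = 0}"
    by (intro AE_not_in) (simp add: negligible_iff_null_sets)
  then have AE_N0: "AE t in lebesgue. emeasure (count_space UNIV) {x \<in> U. f x = t} = N0 t"
  proof eventually_elim
    case (elim t)
    then have "{x \<in> U. f x = t} = {x \<in> (\<Union>k. D k). f x = t}" using D_Un by auto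
    then show ?case
      using count_level_set_disjoint_injective[OF D_disj D_props(2)] by (simp add: N0_def)
  qed
  obtain N where N: "N \<in> borel_measurable borel" "AE t in lborel. N0 t = N t"
    using completion_ex_borel_measurable[OF pieces(1)] by auto
  show ?thesis
  proof (rule that[OF N(1)])
    show "AE t in lborel. emeasure (count_space UNIV) {x \<in> U. f x = t} = N t"
      using AE_N0 N(2) unfolding AE_completion_iff by eventually_elim simp
    have "(\<integral>\<^sup>+ t. N t \<partial>lborel) = (\<integral>\<^sup>+ t. N0 t \<partial>lebesgue)"
      using N(2) by (simp add: nn_integral_completion) (intro nn_integral_cong_AE, simp add: eq_commute)
    also have "\<dots> = (\<integral>\<^sup>+ x. ennreal \<bar>f' x\<bar> * indicator {x \<in> U. f' x \<noteq> 0} x \<partial>lborel)"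
      using pieces(2) D_Un by simp
    also have "\<dots> = (\<integral>\<^sup>+ x. ennreal \<bar>f' x\<bar> * indicator U x \<partial>lborel)"
      by (intro nn_integral_cong) (simp add: indicator_def)
    finally show "(\<integral>\<^sup>+ t. N t \<partial>lborel) = (\<integral>\<^sup>+ x. ennreal \<bar>f' x\<bar> * indicator U x \<partial>lborel)" .
  qed
qed

section \<open>The tangent angle\<close>

lemma tangent_angle_bounds: "0 \<le> tangent_angle v" "tangent_angle v < 2 * pi"
  using Arg_bounded[of v] by (auto simp: tangent_angle_def)

lemma tangent_angle_eq_Ln:
  assumes "v \<notin> \<real>\<^sub>\<ge>\<^sub>0"
  shows "tangent_angle v = pi + Im (Ln (- v))"
proof -
  have v0: "v \<noteq> 0" using assms by auto
  have "Arg v \<noteq> 0"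
    using assms by (auto simp: Arg_eq_0 complex_is_Real_iff complex_nonneg_Reals_iff)
  moreover have "Im (Ln (- v)) = (if Arg v \<le> 0 then Arg v + pi else Arg v - pi)"
    using v0 by (simp add: Arg_eq_Im_Ln[symmetric] Arg_minus)
  ultimately show ?thesis by (auto simp: tangent_angle_def)
qed

lemma nonneg_Reals_norm_1_eq_1:
  fixes v :: complex
  assumes "v \<in> \<real>\<^sub>\<ge>\<^sub>0" and "norm v = 1"
  shows "v = 1"
  using assms nonneg_Reals_cmod_eq_Re[OF assms(1)]
  by (simp add: complex_nonneg_Reals_iff complex_eq_iff)

text \<open>Off the positive real axis the angle is the branch \<open>pi + Im (Ln (- v))\<close> of the
  argument, and for a unit vector \<open>Im (G' / G) = Im (cnj G * G')\<close>.\<close>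
lemma has_real_derivative_tangent_angle:
  fixes G :: "real \<Rightarrow> complex"
  assumes der: "(G has_vector_derivative G') (at y)"
    and unit: "norm (G y) = 1" and off: "G y \<notin> \<real>\<^sub>\<ge>\<^sub>0"
  shows "((\<lambda>z. tangent_angle (G z)) has_real_derivative Im (cnj (G y) * G')) (at y)"
proof -
  have chain: "((Ln \<circ> (\<lambda>z. - G z)) has_vector_derivative (- G' * inverse (- G y))) (at y)"
  proof (rule field_vector_diff_chain_at)
    show "((\<lambda>z. - G z) has_vector_derivative - G') (at y)"
      using der by (rule derivative_intros)
    show "(Ln has_field_derivative inverse (- G y)) (at (- G y))"
      using off by (intro has_field_derivative_Ln)
        (auto simp: complex_nonpos_Reals_iff complex_nonneg_Reals_iff)
  qed
  have "- G' * inverse (- G y) = cnj (G y) * G'"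
  proof -
    have "G y * cnj (G y) = 1" using complex_norm_square[of "G y"] unit by simp
    then have "inverse (G y) = cnj (G y)" by (rule inverse_unique)
    then show ?thesis by (simp add: mult.commute)
  qed
  with chain have "((\<lambda>z. Ln (- G z)) has_derivative (\<lambda>t. t *\<^sub>R (cnj (G y) * G'))) (at y)"
    by (simp only: has_vector_derivative_def o_def)
  then have "((\<lambda>z. Im (Ln (- G z))) has_derivative (\<lambda>t. Im (t *\<^sub>R (cnj (G y) * G')))) (at y)"
    by (rule has_derivative_Im)
  moreover have "(\<lambda>t. Im (t *\<^sub>R (cnj (G y) * G'))) = (*) (Im (cnj (G y) * G'))"
    by (simp add: fun_eq_iff)
  ultimately have "((\<lambda>z. Im (Ln (- G z))) has_real_derivative Im (cnj (G y) * G')) (at y)"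
    by (simp add: has_field_derivative_def)
  from DERIV_add[OF DERIV_const[of pi] this]
  have Ln_der: "((\<lambda>z. pi + Im (Ln (- G z))) has_real_derivative Im (cnj (G y) * G')) (at y)"
    by simp
  have "open (- \<real>\<^sub>\<ge>\<^sub>0 :: complex set)" "G y \<in> - \<real>\<^sub>\<ge>\<^sub>0"
    using off by (auto simp: open_Compl)
  then have "\<forall>\<^sub>F z in nhds y. G z \<in> - \<real>\<^sub>\<ge>\<^sub>0"
    using has_vector_derivative_continuous[OF der] unfolding eventually_nhds continuous_at_open
    by blast
  then have "\<forall>\<^sub>F z in nhds y. pi + Im (Ln (- G z)) = tangent_angle (G z)"
    by eventually_elim (simp add: tangent_angle_eq_Ln)
  from DERIV_cong_ev[OF refl this refl] Ln_der show ?thesis by blast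
qed

lemma countable_isolated_points:
  fixes X :: "real set"
  shows "countable {x \<in> X. \<not> x islimpt X}"
proof -
  define F where "F = (\<lambda>(p::real, q::real). THE x. x \<in> X \<and> p < x \<and> x < q)"
  have "{x \<in> X. \<not> x islimpt X} \<subseteq> F ` (\<rat> \<times> \<rat>)"
  proof
    fix x assume x: "x \<in> {x \<in> X. \<not> x islimpt X}"
    then obtain T where T: "open T" "x \<in> T" "\<And>y. y \<in> X \<Longrightarrow> y \<in> T \<Longrightarrow> y = x"
      unfolding islimpt_def by auto
    obtain e where e: "e > 0" "ball x e \<subseteq> T" using T open_contains_ball by blast
    obtain p where p: "p \<in> \<rat>" "x - e < p" "p < x" using Rats_dense_in_real[of "x - e" x] e by auto
    obtain q where q: "q \<in> \<rat>" "x < q" "q < x + e" using Rats_dense_in_real[of x "x + e"] e by auto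
    have "y = x" if "y \<in> X" "p < y" "y < q" for y
    proof (rule T(3)[OF that(1)])
      show "y \<in> T" using e that p q by (intro subsetD[OF e(2)]) (auto simp: dist_real_def)
    qed
    then have "F (p, q) = x"
      unfolding F_def using x p q by (auto intro!: the_equality)
    then show "x \<in> F ` (\<rat> \<times> \<rat>)" using p q by force
  qed
  then show ?thesis
    by (rule countable_subset) (intro countable_image countable_SIGMA countable_rat)
qed

text \<open>At a limit point of a level set the derivative is a limit of zero difference
  quotients, and isolated points of a set of reals are countable.\<close>
lemma AE_has_vector_derivative_zero_on_level_set:
  fixes G :: "real \<Rightarrow> 'a::real_normed_vector"
  assumes der: "\<And>y. y \<in> S \<Longrightarrow> (G has_vector_derivative G' y) (at y)"
    and level: "\<And>y. y \<in> S \<Longrightarrow> G y = c"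
  shows "AE y in lborel. y \<in> S \<longrightarrow> G' y = 0"
proof -
  have "{x \<in> S. \<not> x islimpt S} \<in> null_sets lborel"
    by (intro countable_imp_null_set_lborel countable_isolated_points)
  then show ?thesis
  proof (rule AE_not_in[THEN AE_mp], intro AE_I2 impI)
    fix y assume y: "y \<notin> {x \<in> S. \<not> x islimpt S}" "y \<in> S"
    have "(G has_vector_derivative G' y) (at y within S)"
      using der[OF y(2)] by (rule has_vector_derivative_at_within)
    moreover have "(G has_vector_derivative 0) (at y within S)"
      by (rule has_vector_derivative_transform_within[OF has_vector_derivative_const zero_less_one y(2)])
         (simp add: level)
    moreover have "at y within S \<noteq> bot" using y by (simp add: trivial_limit_within)
    ultimately show "G' y = 0" using vector_derivative_unique_within by blast
  qed
qed

lemma tangent_angle_along_unit_tangent: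
  fixes g' g'' :: "real \<Rightarrow> complex"
  assumes der: "\<forall>t\<in>{0..L}. (g' has_vector_derivative g'' t) (at t within {0..L})"
    and unit: "\<forall>t\<in>{0..L}. norm (g' t) = 1"
  defines "U \<equiv> {0<..<L} \<inter> g' -` (- \<real>\<^sub>\<ge>\<^sub>0)"
  shows "open U"
    and "\<And>y. y \<in> U \<Longrightarrow>
      ((\<lambda>y. tangent_angle (g' y)) has_real_derivative signed_curv g' g'' y) (at y)"
    and "\<And>y. y \<in> {0<..<L} - U \<Longrightarrow> g' y = 1"
    and "AE y in lborel. y \<in> {0<..<L} - U \<longrightarrow> signed_curv g' g'' y = 0"
proof -
  have g'_der: "(g' has_vector_derivative g'' y) (at y)" if y: "y \<in> {0<..<L}" for y
  proof -
    have "(g' has_vector_derivative g'' y) (at y within {0..L})" using der y by simp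
    then show ?thesis using at_within_Icc_at[of 0 y L] y by simp
  qed
  have "continuous_on {0<..<L} g'"
    by (rule continuous_at_imp_continuous_on) (use g'_der has_vector_derivative_continuous in blast)
  then show "open U"
    unfolding U_def by (intro continuous_open_preimage open_Compl) auto
  show "((\<lambda>y. tangent_angle (g' y)) has_real_derivative signed_curv g' g'' y) (at y)"
    if "y \<in> U" for y
    using that unit unfolding U_def signed_curv_def
    by (intro has_real_derivative_tangent_angle g'_der) auto
  show g'_one: "g' y = 1" if "y \<in> {0<..<L} - U" for y
    using that unit by (intro nonneg_Reals_norm_1_eq_1) (auto simp: U_def)
  have "AE y in lborel. y \<in> {0<..<L} - U \<longrightarrow> g'' y = 0"
    using g'_der g'_one
    by (intro AE_has_vector_derivative_zero_on_level_set[where G = g' and c = 1]) auto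
  then show "AE y in lborel. y \<in> {0<..<L} - U \<longrightarrow> signed_curv g' g'' y = 0"
    by eventually_elim (simp add: signed_curv_def)
qed

section \<open>Marked points\<close>

text \<open>If \<open>\<alpha>\<close> were equal to \<open>\<theta>\<close> on a whole left neighbourhood of a
  level point, it would take the value \<open>\<theta>\<close> at a rational parameter.\<close>
lemma marked_eq_level_set:
  fixes \<alpha> :: "real \<Rightarrow> real"
  assumes \<theta>: "\<theta> \<notin> {\<alpha> 0, \<alpha> L} \<union> \<alpha> ` \<rat>"
  shows "marked \<alpha> L \<theta> = {y \<in> {0<..<L}. \<alpha> y = \<theta>}"
proof (intro equalityI subsetI)
  fix y assume "y \<in> marked \<alpha> L \<theta>"
  then show "y \<in> {y \<in> {0<..<L}. \<alpha> y = \<theta>}"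
    using \<theta> by (cases "y = 0 \<or> y = L") (auto simp: marked_def)
next
  fix y assume y: "y \<in> {y \<in> {0<..<L}. \<alpha> y = \<theta>}"
  have "\<exists>\<delta>. 0 < \<delta> \<and> \<delta> < \<epsilon> \<and> (y - \<delta> \<notin> {0..L} \<or> \<alpha> (y - \<delta>) \<noteq> \<theta>)" if "\<epsilon> > 0" for \<epsilon>
  proof -
    obtain q where q: "q \<in> \<rat>" "y - \<epsilon> < q" "q < y"
      using Rats_dense_in_real[of "y - \<epsilon>" y] \<open>\<epsilon> > 0\<close> by auto
    then have "\<alpha> (y - (y - q)) \<noteq> \<theta>" using \<theta> by auto
    then show ?thesis using q by (intro exI[of _ "y - q"]) auto
  qed
  then show "y \<in> marked \<alpha> L \<theta>" using y by (auto simp: marked_def)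
qed

lemma nn_integral_count_marked_uniform:
  fixes \<alpha> \<alpha>' :: "real \<Rightarrow> real"
  assumes U: "open U" "U \<subseteq> {0<..<L}"
    and der: "\<And>y. y \<in> U \<Longrightarrow> (\<alpha> has_real_derivative \<alpha>' y) (at y)"
    and range: "\<And>y. \<alpha> y \<in> {0..<2 * pi}"
    and off: "\<And>y. y \<in> {0<..<L} - U \<Longrightarrow> \<alpha> y = 0"
  shows "(\<integral>\<^sup>+ \<theta>. emeasure (count_space UNIV) (marked \<alpha> L \<theta>) \<partial>uniform_measure lborel {0..<2 * pi})
         = (\<integral>\<^sup>+ y. ennreal \<bar>\<alpha>' y\<bar> * indicator U y \<partial>lborel) / ennreal (2 * pi)"
proof -
  obtain N where N: "N \<in> borel_measurable borel"
    "AE \<theta> in lborel. emeasure (count_space UNIV) {y \<in> U. \<alpha> y = \<theta>} = N \<theta>"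
    "(\<integral>\<^sup>+ \<theta>. N \<theta> \<partial>lborel) = (\<integral>\<^sup>+ y. ennreal \<bar>\<alpha>' y\<bar> * indicator U y \<partial>lborel)"
    using banach_indicatrix[OF U(1) der] by blast
  have "{0, \<alpha> 0, \<alpha> L} \<union> \<alpha> ` \<rat> \<in> null_sets lborel"
    by (intro countable_imp_null_set_lborel countable_Un countable_image countable_rat) auto
  then have "AE \<theta> in lborel. marked \<alpha> L \<theta> = {y \<in> U. \<alpha> y = \<theta>}"
  proof (rule AE_not_in[THEN AE_mp], intro AE_I2 impI)
    fix \<theta> assume "\<theta> \<notin> {0, \<alpha> 0, \<alpha> L} \<union> \<alpha> ` \<rat>"
    then show "marked \<alpha> L \<theta> = {y \<in> U. \<alpha> y = \<theta>}"
      using marked_eq_level_set[of \<theta> \<alpha> L] off U(2) by auto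
  qed
  with N(2) have marked_N: "AE \<theta> in lborel. emeasure (count_space UNIV) (marked \<alpha> L \<theta>) = N \<theta>"
    by eventually_elim simp
  have "AE \<theta> in lborel. N \<theta> * indicator {0..<2 * pi} \<theta> = N \<theta>"
    using N(2)
  proof eventually_elim
    case (elim \<theta>)
    show ?case
    proof (cases "\<theta> \<in> {0..<2 * pi}")
      case False
      then have "{y \<in> U. \<alpha> y = \<theta>} = {}" using range by blast
      then have "N \<theta> = 0" using elim by (metis emeasure_empty)
      then show ?thesis by simp
    qed simp
  qed
  then have N_supp: "(\<integral>\<^sup>+ \<theta>. N \<theta> * indicator {0..<2 * pi} \<theta> \<partial>lborel) = (\<integral>\<^sup>+ \<theta>. N \<theta> \<partial>lborel)"
    by (rule nn_integral_cong_AE)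
  have "(\<integral>\<^sup>+ \<theta>. emeasure (count_space UNIV) (marked \<alpha> L \<theta>) \<partial>uniform_measure lborel {0..<2 * pi})
      = (\<integral>\<^sup>+ \<theta>. N \<theta> \<partial>uniform_measure lborel {0..<2 * pi})"
    using marked_N by (intro nn_integral_cong_AE AE_uniform_measureI) (auto elim: AE_mp)
  also have "\<dots> = (\<integral>\<^sup>+ \<theta>. N \<theta> * indicator {0..<2 * pi} \<theta> \<partial>lborel) / emeasure lborel {0..<2 * pi}"
    using N(1) by (intro nn_integral_uniform_measure) simp_all
  also have "\<dots> = (\<integral>\<^sup>+ \<theta>. N \<theta> \<partial>lborel) / ennreal (2 * pi)"
    by (simp add: N_supp)
  finally show ?thesis using N(3) by simp
qed

theorem lemma6p2:
  fixes g g' g'' :: "real \<Rightarrow> complex" and L :: real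
  assumes "0 < L"
    and "\<forall>t\<in>{0..L}. (g has_vector_derivative g' t) (at t within {0..L})"
    and "\<forall>t\<in>{0..L}. (g' has_vector_derivative g'' t) (at t within {0..L})"
    and "\<forall>t\<in>{0..L}. norm (g' t) = 1"
    and "\<exists>I :: (real \<times> real) set. countable I \<and>
           {0..L} - (\<Union>(a, b)\<in>I. {a<..<b}) \<in> null_sets lborel \<and>
           (\<forall>(a, b)\<in>I. \<forall>y\<in>{a<..<b} \<inter> {0..L}. \<not> inflection_point (signed_curv g' g'') L y)"
  shows "(\<integral>\<^sup>+ \<theta>. emeasure (count_space UNIV) (marked (\<lambda>y. tangent_angle (g' y)) L \<theta>)
            \<partial>uniform_measure lborel {0..<2 * pi})
         = (\<integral>\<^sup>+ y \<in> {0..L}. ennreal \<bar>signed_curv g' g'' y\<bar> \<partial>lborel) / ennreal (2 * pi)"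
proof -
  define U where "U = {0<..<L} \<inter> g' -` (- \<real>\<^sub>\<ge>\<^sub>0)"
  note angle = tangent_angle_along_unit_tangent[OF assms(3,4), folded U_def]
  have count: "(\<integral>\<^sup>+ \<theta>. emeasure (count_space UNIV) (marked (\<lambda>y. tangent_angle (g' y)) L \<theta>)
            \<partial>uniform_measure lborel {0..<2 * pi})
      = (\<integral>\<^sup>+ y. ennreal \<bar>signed_curv g' g'' y\<bar> * indicator U y \<partial>lborel) / ennreal (2 * pi)"
  proof (rule nn_integral_count_marked_uniform[OF angle(1) _ angle(2)])
    show "U \<subseteq> {0<..<L}" by (auto simp: U_def)
    show "tangent_angle (g' y) \<in> {0..<2 * pi}" for y
      using tangent_angle_bounds by simp
    show "tangent_angle (g' y) = 0" if "y \<in> {0<..<L} - U" for y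
      using angle(3)[OF that] by (simp add: tangent_angle_def)
  qed
  have "AE y in lborel. y \<notin> {0, L}"
    by (intro AE_not_in countable_imp_null_set_lborel) simp
  with angle(4) have "AE y in lborel. ennreal \<bar>signed_curv g' g'' y\<bar> * indicator U y
      = ennreal \<bar>signed_curv g' g'' y\<bar> * indicator {0..L} y"
    by eventually_elim (auto simp: U_def indicator_def)
  then show ?thesis using count by (simp add: nn_integral_cong_AE)
qed

end
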